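(* Let $R$ be a semiprime ring with identity and $f$ an automorphism of $R$. (a) If $R$ is commutative, then the following are equivalent: (i) $f$ is $X$-inner; (ii) $\mathrm{ann}_R((\mathrm{id}-f)(R))\neq 0$; (iii) there is a nonzero ideal $I$ of $R$ such that $f$ is the identity on $I$. (b) If $R$ is commutative and von Neumann regular, then $f$ is $X$-inner if and only if there exists a nonzero idempotent $e\in R$ such that $f$ is the identity on $eR$. (c) If $R$ is von Neumann regular and $f$ is $X$-inner, then $f$ is corner-inner.
   Context: An automorphism $f$ of a semiprime ring $R$ is $X$-inner if there is a nonzero element $u$ of the left Martindale quotient ring of $R$ with $f(r)u=ur$ for all $r\in R$. An automorphism $f$ of $R$ is corner-inner if there exist a nonzero idempotent $e\in R$ and, setting $e'=f^{-1}(e)$, elements $u\in eRe'$ and $v\in e'Re$ such that (a) $uv=e$ and $vu=e'$; (b) $f(x)=uxv$ for all $x\in e'Re'$; (c) $f^{-1}(y)=vyu$ for all $y\in eRe$. Here $\mathrm{ann}_R(S)=\{x\in R: sx=0 \text{ for all } s\in S\}$. *)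

theory Defs
  imports Main
begin

definition rideal :: "'a::ring_1 set \<Rightarrow> bool" where
  "rideal I \<longleftrightarrow> 0 \<in> I \<and> (\<forall>a\<in>I. \<forall>b\<in>I. a + b \<in> I) \<and> (\<forall>a\<in>I. - a \<in> I)
     \<and> (\<forall>a\<in>I. \<forall>r. r * a \<in> I \<and> a * r \<in> I)"

definition semiprime :: "'a::ring_1 itself \<Rightarrow> bool" where
  "semiprime _ \<longleftrightarrow> (\<forall>a::'a. (\<forall>r. a * r * a = 0) \<longrightarrow> a = 0)"

definition von_neumann_regular :: "'a::ring_1 itself \<Rightarrow> bool" where
  "von_neumann_regular _ \<longleftrightarrow> (\<forall>a::'a. \<exists>x. a * x * a = a)"

definition ring_automorphism :: "('a::ring_1 \<Rightarrow> 'a) \<Rightarrow> bool" where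
  "ring_automorphism f \<longleftrightarrow> bij f \<and> (\<forall>x y. f (x + y) = f x + f y)
     \<and> (\<forall>x y. f (x * y) = f x * f y) \<and> f 1 = 1"

definition ann :: "'a::ring_1 set \<Rightarrow> 'a set" where
  "ann S = {x. \<forall>s\<in>S. s * x = 0}"

definition ideal_gen :: "'a::ring_1 set \<Rightarrow> 'a set" where
  "ideal_gen S = \<Inter>{K. rideal K \<and> S \<subseteq> K}"

definition ideal_prod :: "'a::ring_1 set \<Rightarrow> 'a set \<Rightarrow> 'a set" where
  "ideal_prod J I = ideal_gen {x * y |x y. x \<in> J \<and> y \<in> I}"

text \<open>Dense ideals: two-sided ideals with zero (right) annihilator
 (for semiprime rings left and right annihilators of ideals coincide).\<close>
definition dense_ideal :: "'a::ring_1 set \<Rightarrow> bool" where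
  "dense_ideal I \<longleftrightarrow> rideal I \<and> (\<forall>x. (\<forall>a\<in>I. a * x = 0) \<longrightarrow> x = 0)"

text \<open>Left Martindale quotient ring: representatives are pairs (I, phi) with I a dense
ideal and phi : I \<rightarrow> R a homomorphism of left R-modules (maps written on the right,
a.q = phi a).\<close>
definition mq_reps :: "('a::ring_1 set \<times> ('a \<Rightarrow> 'a)) set" where
  "mq_reps = {(I, \<phi>). dense_ideal I \<and> (\<forall>a\<in>I. \<forall>b\<in>I. \<phi> (a + b) = \<phi> a + \<phi> b)
      \<and> (\<forall>r. \<forall>a\<in>I. \<phi> (r * a) = r * \<phi> a)}"

definition mq_rel :: "(('a::ring_1 set \<times> ('a \<Rightarrow> 'a)) \<times> ('a set \<times> ('a \<Rightarrow> 'a))) set" where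
  "mq_rel = {((I, \<phi>), (J, \<psi>)). (I, \<phi>) \<in> mq_reps \<and> (J, \<psi>) \<in> mq_reps \<and>
      (\<exists>K. dense_ideal K \<and> K \<subseteq> I \<inter> J \<and> (\<forall>a\<in>K. \<phi> a = \<psi> a))}"

definition martindale_Q :: "('a::ring_1 set \<times> ('a \<Rightarrow> 'a)) set set" where
  "martindale_Q = mq_reps // mq_rel"

definition mq_class :: "'a::ring_1 set \<times> ('a \<Rightarrow> 'a) \<Rightarrow> ('a set \<times> ('a \<Rightarrow> 'a)) set" where
  "mq_class p = mq_rel `` {p}"

text \<open>Product of representatives: a(pq) = (a p) q, defined on the ideal JI.\<close>
definition rep_mult :: "'a::ring_1 set \<times> ('a \<Rightarrow> 'a) \<Rightarrow> 'a set \<times> ('a \<Rightarrow> 'a) \<Rightarrow> 'a set \<times> ('a \<Rightarrow> 'a)" where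
  "rep_mult p q = (ideal_prod (fst q) (fst p), snd q \<circ> snd p)"

definition mq_mult :: "('a::ring_1 set \<times> ('a \<Rightarrow> 'a)) set \<Rightarrow> ('a set \<times> ('a \<Rightarrow> 'a)) set
     \<Rightarrow> ('a set \<times> ('a \<Rightarrow> 'a)) set" where
  "mq_mult U V = mq_class (rep_mult (SOME p. p \<in> U) (SOME q. q \<in> V))"

definition mq_zero :: "('a::ring_1 set \<times> ('a \<Rightarrow> 'a)) set" where
  "mq_zero = mq_class (UNIV, \<lambda>_. 0)"

definition mq_emb :: "'a::ring_1 \<Rightarrow> ('a set \<times> ('a \<Rightarrow> 'a)) set" where
  "mq_emb r = mq_class (UNIV, \<lambda>a. a * r)"

definition X_inner :: "('a::ring_1 \<Rightarrow> 'a) \<Rightarrow> bool" where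
  "X_inner f \<longleftrightarrow> (\<exists>u\<in>martindale_Q. u \<noteq> mq_zero \<and>
      (\<forall>r. mq_mult (mq_emb (f r)) u = mq_mult u (mq_emb r)))"

definition corner :: "'a::ring_1 \<Rightarrow> 'a \<Rightarrow> 'a set" where
  "corner e e' = {e * r * e' |r. True}"

definition corner_inner :: "('a::ring_1 \<Rightarrow> 'a) \<Rightarrow> bool" where
  "corner_inner f \<longleftrightarrow> (\<exists>e. e * e = e \<and> e \<noteq> 0 \<and>
     (let e' = inv f e in \<exists>u\<in>corner e e'. \<exists>v\<in>corner e' e.
        u * v = e \<and> v * u = e' \<and> (\<forall>x\<in>corner e' e'. f x = u * x * v)
        \<and> (\<forall>y\<in>corner e e. inv f y = v * y * u)))"

end

theory Submission
  imports Defs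
begin

(*
  Everything reduces to representatives of the Martindale quotient: f is X-inner iff some
  nonzero left R-linear map phi on a dense ideal J satisfies phi (a * f r) = phi a * r.

  (a) For commutative R the values of such a phi are annihilated by every r - f r. Conversely,
  the annihilator A of (id - f)(R) is an ideal fixed pointwise by f, because (x - f x)^2 = 0 for
  x in A and a commutative semiprime ring has no nilpotents; and an ideal I fixed by f yields a
  representative, the projection of the dense ideal I + ann I (a direct sum) onto I.
  (b) If R is moreover regular, a nonzero a in such an ideal gives the idempotent e = a x with
  a x a = a, and eR is again such an ideal.
  (c) In a regular ring take b in J with phi b ~= 0 and the idempotent g = y b, b y b = b. Then
  p = phi g is nonzero and satisfies p x = f x * p on the corner g' R g', where g' = f^-1 g.
  A quasi-inverse of p produces an idempotent e' with p e' = p and w p = e', and u = p,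
  v = e' w (f e') implement f between the corners e' R e' and (f e') R (f e').
*)

section \<open>Ideals and ring automorphisms\<close>

lemma rideal_zero: "rideal I \<Longrightarrow> 0 \<in> I"
  and rideal_add: "rideal I \<Longrightarrow> a \<in> I \<Longrightarrow> b \<in> I \<Longrightarrow> a + b \<in> I"
  and rideal_uminus: "rideal I \<Longrightarrow> a \<in> I \<Longrightarrow> - a \<in> I"
  and rideal_mult_left: "rideal I \<Longrightarrow> a \<in> I \<Longrightarrow> r * a \<in> I"
  and rideal_mult_right: "rideal I \<Longrightarrow> a \<in> I \<Longrightarrow> a * r \<in> I"
  unfolding rideal_def by auto

lemma rideal_diff: "rideal I \<Longrightarrow> a \<in> I \<Longrightarrow> b \<in> I \<Longrightarrow> a - b \<in> I"
  by (metis diff_conv_add_uminus rideal_add rideal_uminus)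

lemma rideal_UNIV: "rideal UNIV"
  unfolding rideal_def by simp

lemma rideal_Int: "rideal I \<Longrightarrow> rideal J \<Longrightarrow> rideal (I \<inter> J)"
  unfolding rideal_def by auto

lemma rideal_ann_comm:
  fixes S :: "'a::ring_1 set"
  assumes comm: "\<And>x y::'a. x * y = y * x"
  shows "rideal (ann S)"
  unfolding rideal_def ann_def
proof (intro conjI ballI allI; clarify)
  fix a r s assume "\<forall>s\<in>S. s * a = 0" "s \<in> S"
  then have "s * a = 0" by blast
  then show "s * (r * a) = 0" "s * (a * r) = 0"
    by (metis comm mult.assoc mult_zero_right mult_zero_left)+
qed (auto simp: distrib_left)

lemma rideal_principal_comm:
  fixes e :: "'a::ring_1"
  assumes comm: "\<And>x y::'a. x * y = y * x"
  shows "rideal (range ((*) e))"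
  unfolding rideal_def
proof (intro conjI ballI allI)
  show "0 \<in> range ((*) e)" by (metis mult_zero_right rangeI)
  fix a b r assume "a \<in> range ((*) e)" "b \<in> range ((*) e)"
  then obtain s t where "a = e * s" "b = e * t" by blast
  then have "a + b = e * (s + t)" "- a = e * (- s)" "r * a = e * (r * s)" "a * r = e * (s * r)"
    by (simp_all add: distrib_left mult.assoc) (metis comm mult.assoc)
  then show "a + b \<in> range ((*) e)" "- a \<in> range ((*) e)"
    "r * a \<in> range ((*) e)" "a * r \<in> range ((*) e)" by (metis rangeI)+
qed

definition ideal_sum :: "'a::ring_1 set \<Rightarrow> 'a set \<Rightarrow> 'a set" where
  "ideal_sum I J = {i + j |i j. i \<in> I \<and> j \<in> J}"

lemma rideal_ideal_sum:
  assumes I: "rideal I" and J: "rideal J"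
  shows "rideal (ideal_sum I J)"
  unfolding rideal_def ideal_sum_def
proof (intro conjI ballI allI; clarify?)
  show "\<exists>i j. 0 = i + j \<and> i \<in> I \<and> j \<in> J" using I J rideal_zero by force
  fix i j i' j' r assume ij: "i \<in> I" "j \<in> J" and ij': "i' \<in> I" "j' \<in> J"
  show "\<exists>a b. i + j + (i' + j') = a + b \<and> a \<in> I \<and> b \<in> J"
    using ij ij' I J by (intro exI[of _ "i + i'"] exI[of _ "j + j'"]) (simp add: rideal_add algebra_simps)
  show "\<exists>a b. - (i + j) = a + b \<and> a \<in> I \<and> b \<in> J"
    using ij I J by (intro exI[of _ "- i"] exI[of _ "- j"]) (simp add: rideal_uminus)
  show "\<exists>a b. r * (i + j) = a + b \<and> a \<in> I \<and> b \<in> J"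
    using ij I J by (intro exI[of _ "r * i"] exI[of _ "r * j"]) (simp add: rideal_mult_left distrib_left)
  show "\<exists>a b. (i + j) * r = a + b \<and> a \<in> I \<and> b \<in> J"
    using ij I J by (intro exI[of _ "i * r"] exI[of _ "j * r"]) (simp add: rideal_mult_right distrib_right)
qed

lemma ideal_sum_subset_left: "rideal J \<Longrightarrow> I \<subseteq> ideal_sum I J"
  and ideal_sum_subset_right: "rideal I \<Longrightarrow> J \<subseteq> ideal_sum I J"
  unfolding ideal_sum_def by (force dest: rideal_zero)+

lemma ring_automorphism_add: "ring_automorphism f \<Longrightarrow> f (x + y) = f x + f y"
  and ring_automorphism_mult: "ring_automorphism f \<Longrightarrow> f (x * y) = f x * f y"
  and ring_automorphism_bij: "ring_automorphism f \<Longrightarrow> bij f"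
  unfolding ring_automorphism_def by auto

lemma ring_automorphism_zero: "ring_automorphism f \<Longrightarrow> f 0 = 0"
  using ring_automorphism_add[of f 0 0] by simp

lemma ring_automorphism_diff: "ring_automorphism f \<Longrightarrow> f (x - y) = f x - f y"
  using ring_automorphism_add[of f "x - y" y] by (simp add: algebra_simps)

lemma ring_automorphism_inv_apply: "ring_automorphism f \<Longrightarrow> f (inv f y) = y"
  by (simp add: ring_automorphism_bij bij_is_surj surj_f_inv_f)

lemma ring_automorphism_inj: "ring_automorphism f \<Longrightarrow> inj f"
  by (simp add: ring_automorphism_bij bij_is_inj)

lemma dense_ideal_rideal: "dense_ideal K \<Longrightarrow> rideal K"
  unfolding dense_ideal_def by simp

lemma dense_ideal_cancel_left:
  fixes x y :: "'a::ring_1"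
  assumes "dense_ideal K" and "\<And>c. c \<in> K \<Longrightarrow> c * x = c * y"
  shows "x = y"
proof -
  have "\<forall>c\<in>K. c * (x - y) = 0" using assms(2) by (simp add: right_diff_distrib)
  then show ?thesis using assms(1) unfolding dense_ideal_def by auto
qed

lemma dense_ideal_UNIV: "dense_ideal UNIV"
  unfolding dense_ideal_def using rideal_UNIV by (metis UNIV_I mult_1)

lemma dense_ideal_Int:
  assumes I: "dense_ideal I" and J: "dense_ideal J"
  shows "dense_ideal (I \<inter> J)"
  unfolding dense_ideal_def
proof (intro conjI allI impI)
  show "rideal (I \<inter> J)" using I J by (simp add: dense_ideal_rideal rideal_Int)
  fix x assume x: "\<forall>a\<in>I \<inter> J. a * x = 0"
  have "j * x = 0" if "j \<in> J" for j
  proof (rule dense_ideal_cancel_left[OF I])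
    fix i assume "i \<in> I"
    then have "i * j \<in> I \<inter> J"
      using \<open>j \<in> J\<close> I J by (simp add: dense_ideal_rideal rideal_mult_left rideal_mult_right)
    then show "i * (j * x) = i * 0" using x by (simp add: mult.assoc[symmetric])
  qed
  then show "x = 0" using J unfolding dense_ideal_def by blast
qed

lemma rideal_ideal_gen: "rideal (ideal_gen S)"
  unfolding ideal_gen_def rideal_def by auto

lemma ideal_gen_subset: "S \<subseteq> ideal_gen S"
  unfolding ideal_gen_def by auto

lemma ideal_gen_least: "rideal K \<Longrightarrow> S \<subseteq> K \<Longrightarrow> ideal_gen S \<subseteq> K"
  unfolding ideal_gen_def by auto

lemma ideal_gen_mono: "S \<subseteq> T \<Longrightarrow> ideal_gen S \<subseteq> ideal_gen T"
  unfolding ideal_gen_def by blast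

lemma mult_mem_ideal_prod: "x \<in> J \<Longrightarrow> y \<in> I \<Longrightarrow> x * y \<in> ideal_prod J I"
  unfolding ideal_prod_def by (rule subsetD[OF ideal_gen_subset]) blast

lemma ideal_prod_subset: "rideal J \<Longrightarrow> rideal I \<Longrightarrow> ideal_prod J I \<subseteq> J \<inter> I"
  unfolding ideal_prod_def
  by (rule ideal_gen_least) (auto simp: rideal_Int rideal_mult_left rideal_mult_right)

lemma ideal_prod_mono: "J \<subseteq> J' \<Longrightarrow> I \<subseteq> I' \<Longrightarrow> ideal_prod J I \<subseteq> ideal_prod J' I'"
  unfolding ideal_prod_def by (rule ideal_gen_mono) blast

lemma dense_ideal_prod:
  assumes J: "dense_ideal J" and I: "dense_ideal I"
  shows "dense_ideal (ideal_prod J I)"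
  unfolding dense_ideal_def
proof (intro conjI allI impI)
  show "rideal (ideal_prod J I)" unfolding ideal_prod_def by (rule rideal_ideal_gen)
  fix x assume x: "\<forall>a\<in>ideal_prod J I. a * x = 0"
  have "i * x = 0" if "i \<in> I" for i
  proof (rule dense_ideal_cancel_left[OF J])
    fix j assume "j \<in> J"
    then show "j * (i * x) = j * 0"
      using x mult_mem_ideal_prod[OF _ \<open>i \<in> I\<close>] by (simp add: mult.assoc[symmetric])
  qed
  then show "x = 0" using I unfolding dense_ideal_def by blast
qed

section \<open>The left Martindale quotient ring via representatives\<close>

lemma mq_reps_dense_ideal: "(I, \<phi>) \<in> mq_reps \<Longrightarrow> dense_ideal I"
  and mq_reps_add: "(I, \<phi>) \<in> mq_reps \<Longrightarrow> a \<in> I \<Longrightarrow> b \<in> I \<Longrightarrow> \<phi> (a + b) = \<phi> a + \<phi> b"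
  and mq_reps_mult_left: "(I, \<phi>) \<in> mq_reps \<Longrightarrow> a \<in> I \<Longrightarrow> \<phi> (r * a) = r * \<phi> a"
  unfolding mq_reps_def by auto

lemma mq_reps_rideal: "(I, \<phi>) \<in> mq_reps \<Longrightarrow> rideal I"
  by (simp add: dense_ideal_rideal mq_reps_dense_ideal)

lemma mq_reps_zero: "(I, \<phi>) \<in> mq_reps \<Longrightarrow> \<phi> 0 = 0"
  using mq_reps_mult_left[of I \<phi> 0 0] by (simp add: mq_reps_rideal rideal_zero)

lemma mq_reps_uminus: "(I, \<phi>) \<in> mq_reps \<Longrightarrow> a \<in> I \<Longrightarrow> \<phi> (- a) = - \<phi> a"
  using mq_reps_mult_left[of I \<phi> a "- 1"] by simp

lemma mq_reps_image_ideal_prod: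
  assumes rep: "(I, \<alpha>) \<in> mq_reps" and J: "rideal J" and a: "a \<in> ideal_prod J I"
  shows "\<alpha> a \<in> J"
proof -
  have I: "rideal I" using rep by (rule mq_reps_rideal)
  txt \<open>Asking for all right multiples a * s, not just a, makes T closed under right
    multiplication.\<close>
  define T where "T = {a \<in> I. \<forall>s. \<alpha> (a * s) \<in> J}"
  have "rideal T"
    unfolding rideal_def
  proof (intro conjI ballI allI)
    show "0 \<in> T" unfolding T_def using I J rep by (simp add: rideal_zero mq_reps_zero)
    fix a b r assume a: "a \<in> T" and b: "b \<in> T"
    then show "a + b \<in> T"
      unfolding T_def using I J by (simp add: distrib_right mq_reps_add[OF rep] rideal_add rideal_mult_right)
    show "- a \<in> T"
      using a I J unfolding T_def
      by (simp add: mq_reps_uminus[OF rep] rideal_uminus rideal_mult_right flip: minus_mult_left)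
    show "r * a \<in> T"
      using a I J unfolding T_def
      by (simp add: mq_reps_mult_left[OF rep] rideal_mult_left rideal_mult_right mult.assoc)
    show "a * r \<in> T"
      using a I unfolding T_def by (simp add: rideal_mult_right mult.assoc)
  qed
  moreover have "{x * y |x y. x \<in> J \<and> y \<in> I} \<subseteq> T"
    unfolding T_def using I J
    by (auto simp: mq_reps_mult_left[OF rep] rideal_mult_left rideal_mult_right mult.assoc)
  ultimately have "ideal_prod J I \<subseteq> T"
    unfolding ideal_prod_def by (rule ideal_gen_least)
  then show ?thesis using a mult_1_right[of a] unfolding T_def by (metis (mono_tags) CollectD subsetD)
qed

lemma rep_mult_mq_reps:
  assumes p: "(I, \<alpha>) \<in> mq_reps" and q: "(J, \<beta>) \<in> mq_reps"
  shows "rep_mult (I, \<alpha>) (J, \<beta>) \<in> mq_reps"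
proof -
  have sub: "ideal_prod J I \<subseteq> J \<inter> I"
    using ideal_prod_subset[OF mq_reps_rideal[OF q] mq_reps_rideal[OF p]] .
  have img: "\<alpha> a \<in> J" if "a \<in> ideal_prod J I" for a
    using mq_reps_image_ideal_prod[OF p _ that] q by (simp add: mq_reps_rideal)
  show ?thesis
    unfolding rep_mult_def mq_reps_def
    using sub img mq_reps_add[OF p] mq_reps_add[OF q] mq_reps_mult_left[OF p] mq_reps_mult_left[OF q]
    by (auto simp: dense_ideal_prod mq_reps_dense_ideal[OF p] mq_reps_dense_ideal[OF q] subset_iff)
qed

lemma equiv_mq_rel: "equiv mq_reps mq_rel"
proof (rule equivI)
  show "mq_rel \<subseteq> mq_reps \<times> mq_reps"
    unfolding mq_rel_def by auto
next
  show "refl_on mq_reps mq_rel"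
    unfolding refl_on_def mq_rel_def by (auto intro: mq_reps_dense_ideal)
next
  show "sym mq_rel"
    by (rule symI) (auto simp: mq_rel_def Int_commute)
next
  show "trans mq_rel"
  proof (rule transI)
    fix p q s assume pq: "(p, q) \<in> mq_rel" and qs: "(q, s) \<in> mq_rel"
    obtain I \<alpha> J \<beta> L \<gamma> where eqs: "p = (I, \<alpha>)" "q = (J, \<beta>)" "s = (L, \<gamma>)"
      by (metis prod.collapse)
    obtain K where "dense_ideal K" "K \<subseteq> I \<inter> J" "\<forall>a\<in>K. \<alpha> a = \<beta> a"
      using pq eqs unfolding mq_rel_def by auto
    moreover obtain K' where "dense_ideal K'" "K' \<subseteq> J \<inter> L" "\<forall>a\<in>K'. \<beta> a = \<gamma> a"
      using qs eqs unfolding mq_rel_def by auto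
    ultimately show "(p, s) \<in> mq_rel"
      using pq qs eqs unfolding mq_rel_def
      by (auto simp: dense_ideal_Int intro!: exI[of _ "K \<inter> K'"])
  qed
qed

lemma rep_mult_mq_rel:
  assumes p: "((I, \<alpha>), (I', \<alpha>')) \<in> mq_rel" and q: "((J, \<beta>), (J', \<beta>')) \<in> mq_rel"
  shows "(rep_mult (I, \<alpha>) (J, \<beta>), rep_mult (I', \<alpha>') (J', \<beta>')) \<in> mq_rel"
proof -
  obtain K where K: "dense_ideal K" "K \<subseteq> I \<inter> I'" "\<forall>a\<in>K. \<alpha> a = \<alpha>' a"
    using p unfolding mq_rel_def by auto
  obtain L where L: "dense_ideal L" "L \<subseteq> J \<inter> J'" "\<forall>a\<in>L. \<beta> a = \<beta>' a"
    using q unfolding mq_rel_def by auto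
  have reps: "(I, \<alpha>) \<in> mq_reps" "(I', \<alpha>') \<in> mq_reps" "(J, \<beta>) \<in> mq_reps" "(J', \<beta>') \<in> mq_reps"
    using p q unfolding mq_rel_def by auto
  have "ideal_prod L K \<subseteq> ideal_prod J I \<inter> ideal_prod J' I'"
    using ideal_prod_mono[of L J K I] ideal_prod_mono[of L J' K I'] K(2) L(2) by blast
  moreover have "\<beta> (\<alpha> a) = \<beta>' (\<alpha>' a)" if a: "a \<in> ideal_prod L K" for a
  proof -
    have "a \<in> ideal_prod L I" using a K(2) ideal_prod_mono[of L L K I] by auto
    then have "\<alpha> a \<in> L"
      using mq_reps_image_ideal_prod[OF reps(1)] L(1) by (simp add: dense_ideal_rideal)
    moreover have "a \<in> K"
      using a ideal_prod_subset[OF dense_ideal_rideal[OF L(1)] dense_ideal_rideal[OF K(1)]] by blast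
    ultimately show ?thesis using K(3) L(3) by simp
  qed
  moreover have "dense_ideal (ideal_prod L K)" using K(1) L(1) by (rule dense_ideal_prod[rotated])
  moreover have "rep_mult (I, \<alpha>) (J, \<beta>) \<in> mq_reps" "rep_mult (I', \<alpha>') (J', \<beta>') \<in> mq_reps"
    using reps by (simp_all add: rep_mult_mq_reps)
  ultimately show ?thesis
    unfolding mq_rel_def by (simp add: rep_mult_def) blast
qed

lemma mq_mult_mq_class:
  assumes "p \<in> mq_reps" and "q \<in> mq_reps"
  shows "mq_mult (mq_class p) (mq_class q) = mq_class (rep_mult p q)"
proof -
  define p' where "p' = (SOME x. x \<in> mq_class p)"
  define q' where "q' = (SOME x. x \<in> mq_class q)"
  have "(p, p) \<in> mq_rel" "(q, q) \<in> mq_rel"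
    using equiv_mq_rel assms unfolding equiv_def refl_on_def by blast+
  then have "(p, p') \<in> mq_rel" "(q, q') \<in> mq_rel"
    unfolding p'_def q'_def mq_class_def Image_singleton_iff by (auto intro: someI)
  then have "(rep_mult p q, rep_mult p' q') \<in> mq_rel"
    by (metis rep_mult_mq_rel prod.collapse)
  then show ?thesis
    unfolding mq_mult_def p'_def[symmetric] q'_def[symmetric]
    by (simp add: mq_class_def equiv_class_eq[OF equiv_mq_rel])
qed

lemma mq_reps_eqI_dense:
  assumes rep: "(I, \<alpha>) \<in> mq_reps" and K: "dense_ideal K" and a: "a \<in> I"
    and eq: "\<And>c. c \<in> K \<Longrightarrow> \<alpha> (c * a) = c * y"
  shows "\<alpha> a = y"
  using K by (rule dense_ideal_cancel_left) (simp add: eq mq_reps_mult_left[OF rep a, symmetric])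

lemma mq_emb_mq_reps: "(UNIV, \<lambda>a. a * t) \<in> mq_reps"
  unfolding mq_reps_def by (simp add: dense_ideal_UNIV distrib_right mult.assoc)

lemma mq_class_eq_zero_iff:
  assumes rep: "(J, \<phi>) \<in> mq_reps"
  shows "mq_class (J, \<phi>) = mq_zero \<longleftrightarrow> (\<forall>a\<in>J. \<phi> a = 0)"
proof -
  have zero: "(UNIV, \<lambda>_. 0) \<in> mq_reps" using mq_emb_mq_reps[of 0] by simp
  have "mq_class (J, \<phi>) = mq_zero \<longleftrightarrow> ((J, \<phi>), (UNIV, \<lambda>_. 0)) \<in> mq_rel"
    unfolding mq_zero_def mq_class_def using equiv_mq_rel rep zero by (rule eq_equiv_class_iff)
  also have "\<dots> \<longleftrightarrow> (\<forall>a\<in>J. \<phi> a = 0)"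
  proof
    assume "((J, \<phi>), (UNIV, \<lambda>_. 0)) \<in> mq_rel"
    then obtain K where K: "dense_ideal K" "K \<subseteq> J" "\<forall>c\<in>K. \<phi> c = 0"
      unfolding mq_rel_def by auto
    show "\<forall>a\<in>J. \<phi> a = 0"
      using mq_reps_eqI_dense[OF rep K(1)] K(3) rideal_mult_right[OF dense_ideal_rideal[OF K(1)]]
      by simp
  next
    assume "\<forall>a\<in>J. \<phi> a = 0"
    then show "((J, \<phi>), (UNIV, \<lambda>_. 0)) \<in> mq_rel"
      unfolding mq_rel_def using rep zero mq_reps_dense_ideal[OF rep] by auto
  qed
  finally show ?thesis .
qed

lemma mq_rel_rep_mult_emb_iff:
  assumes rep: "(J, \<phi>) \<in> mq_reps"
  shows "(rep_mult (UNIV, \<lambda>a. a * t) (J, \<phi>), rep_mult (J, \<phi>) (UNIV, \<lambda>a. a * s)) \<in> mq_rel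
    \<longleftrightarrow> (\<forall>a\<in>J. \<phi> (a * t) = \<phi> a * s)"
proof
  assume "(rep_mult (UNIV, \<lambda>a. a * t) (J, \<phi>), rep_mult (J, \<phi>) (UNIV, \<lambda>a. a * s)) \<in> mq_rel"
  then obtain K where K: "dense_ideal K" "K \<subseteq> J" "\<forall>c\<in>K. \<phi> (c * t) = \<phi> c * s"
    unfolding mq_rel_def rep_mult_def
    using ideal_prod_subset[OF mq_reps_rideal[OF rep] rideal_UNIV] by auto
  show "\<forall>a\<in>J. \<phi> (a * t) = \<phi> a * s"
  proof
    fix a assume a: "a \<in> J"
    show "\<phi> (a * t) = \<phi> a * s"
    proof (rule mq_reps_eqI_dense[OF rep K(1)])
      show "a * t \<in> J" using mq_reps_rideal[OF rep] a by (rule rideal_mult_right)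
      fix c assume "c \<in> K"
      then have "c * a \<in> K" using K(1) by (simp add: dense_ideal_rideal rideal_mult_right)
      then show "\<phi> (c * (a * t)) = c * (\<phi> a * s)"
        using K(3) a by (simp add: mq_reps_mult_left[OF rep] mult.assoc[symmetric])
    qed
  qed
next
  assume eq: "\<forall>a\<in>J. \<phi> (a * t) = \<phi> a * s"
  let ?K = "ideal_prod J UNIV \<inter> ideal_prod UNIV J"
  have "dense_ideal ?K" "?K \<subseteq> J"
    using mq_reps_dense_ideal[OF rep] ideal_prod_subset[OF mq_reps_rideal[OF rep] rideal_UNIV]
    by (auto simp: dense_ideal_Int dense_ideal_prod dense_ideal_UNIV)
  moreover have "rep_mult (UNIV, \<lambda>a. a * t) (J, \<phi>) \<in> mq_reps"
    and "rep_mult (J, \<phi>) (UNIV, \<lambda>a. a * s) \<in> mq_reps"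
    using rep_mult_mq_reps rep mq_emb_mq_reps by blast+
  ultimately show "(rep_mult (UNIV, \<lambda>a. a * t) (J, \<phi>), rep_mult (J, \<phi>) (UNIV, \<lambda>a. a * s)) \<in> mq_rel"
    using eq unfolding mq_rel_def by (auto simp: rep_mult_def intro!: exI[of _ ?K])
qed

lemma mq_mult_mq_emb_commute_iff:
  assumes rep: "(J, \<phi>) \<in> mq_reps"
  shows "mq_mult (mq_emb t) (mq_class (J, \<phi>)) = mq_mult (mq_class (J, \<phi>)) (mq_emb s)
    \<longleftrightarrow> (\<forall>a\<in>J. \<phi> (a * t) = \<phi> a * s)"
proof -
  have reps: "rep_mult (UNIV, \<lambda>a. a * t) (J, \<phi>) \<in> mq_reps"
    "rep_mult (J, \<phi>) (UNIV, \<lambda>a. a * s) \<in> mq_reps"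
    using rep_mult_mq_reps rep mq_emb_mq_reps by blast+
  show ?thesis
    unfolding mq_emb_def
    unfolding mq_mult_mq_class[OF mq_emb_mq_reps rep] mq_mult_mq_class[OF rep mq_emb_mq_reps]
    unfolding mq_class_def eq_equiv_class_iff[OF equiv_mq_rel reps]
    by (rule mq_rel_rep_mult_emb_iff[OF rep])
qed

lemma martindale_Q_eq_image: "martindale_Q = mq_class ` mq_reps"
  unfolding martindale_Q_def quotient_def mq_class_def by blast

lemma X_inner_iff_mq_reps:
  "X_inner f \<longleftrightarrow>
    (\<exists>J \<phi>. (J, \<phi>) \<in> mq_reps \<and> (\<exists>a\<in>J. \<phi> a \<noteq> 0) \<and> (\<forall>r. \<forall>a\<in>J. \<phi> (a * f r) = \<phi> a * r))"
  (is "_ \<longleftrightarrow> (\<exists>J \<phi>. ?rep J \<phi>)")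
proof
  assume "X_inner f"
  then obtain J \<phi> where rep: "(J, \<phi>) \<in> mq_reps" and "mq_class (J, \<phi>) \<noteq> mq_zero"
    and "\<forall>r. mq_mult (mq_emb (f r)) (mq_class (J, \<phi>)) = mq_mult (mq_class (J, \<phi>)) (mq_emb r)"
    unfolding X_inner_def martindale_Q_eq_image by auto
  then show "\<exists>J \<phi>. ?rep J \<phi>"
    using mq_class_eq_zero_iff[OF rep] mq_mult_mq_emb_commute_iff[OF rep] by blast
next
  assume "\<exists>J \<phi>. ?rep J \<phi>"
  then obtain J \<phi> where rep: "(J, \<phi>) \<in> mq_reps" and "?rep J \<phi>" by blast
  then have "mq_class (J, \<phi>) \<noteq> mq_zero"
    and "\<forall>r. mq_mult (mq_emb (f r)) (mq_class (J, \<phi>)) = mq_mult (mq_class (J, \<phi>)) (mq_emb r)"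
    using mq_class_eq_zero_iff[OF rep] mq_mult_mq_emb_commute_iff[OF rep] by blast+
  then show "X_inner f"
    unfolding X_inner_def martindale_Q_eq_image using rep by blast
qed

section \<open>Commutative semiprime rings\<close>

lemma semiprime_comm_square_eq_zero:
  fixes a :: "'a::ring_1"
  assumes "semiprime TYPE('a)" and comm: "\<And>x y::'a. x * y = y * x" and "a * a = 0"
  shows "a = 0"
proof -
  have "a * r * a = 0" for r
    using \<open>a * a = 0\<close> by (simp add: comm[of a r] mult.assoc)
  then show ?thesis using assms(1) unfolding semiprime_def by blast
qed

lemma fixed_ideal_mult_right:
  assumes "ring_automorphism f" and "rideal I" and "\<forall>x\<in>I. f x = x" and "i \<in> I"
  shows "i * f r = i * r"
proof -
  have "f (i * r) = i * r" using assms by (simp add: rideal_mult_right)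
  then show ?thesis using assms by (simp add: ring_automorphism_mult)
qed

lemma ann_diff_range_ne_zero_if_X_inner:
  fixes f :: "'a::ring_1 \<Rightarrow> 'a"
  assumes comm: "\<And>x y::'a. x * y = y * x" and "X_inner f"
  shows "ann (range (\<lambda>r. r - f r)) \<noteq> {0}"
proof -
  obtain J \<phi> b where rep: "(J, \<phi>) \<in> mq_reps" and b: "b \<in> J" "\<phi> b \<noteq> 0"
    and intertw: "\<forall>r. \<forall>a\<in>J. \<phi> (a * f r) = \<phi> a * r"
    using assms(2) unfolding X_inner_iff_mq_reps by blast
  have "f r * \<phi> b = r * \<phi> b" for r
  proof -
    have "f r * \<phi> b = \<phi> (f r * b)" using mq_reps_mult_left[OF rep b(1)] by simp
    also have "\<dots> = \<phi> (b * f r)" using comm by metis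
    also have "\<dots> = \<phi> b * r" using intertw b(1) by simp
    finally show ?thesis using comm by metis
  qed
  then have "\<phi> b \<in> ann (range (\<lambda>r. r - f r))"
    unfolding ann_def by (auto simp: left_diff_distrib)
  then show ?thesis using b(2) by blast
qed

lemma ann_diff_range_fixed:
  fixes f :: "'a::ring_1 \<Rightarrow> 'a"
  assumes sp: "semiprime TYPE('a)" and aut: "ring_automorphism f"
    and comm: "\<And>x y::'a. x * y = y * x" and x: "x \<in> ann (range (\<lambda>r. r - f r))"
  shows "f x = x"
proof -
  have ann: "y \<in> ann (range (\<lambda>r. r - f r)) \<longleftrightarrow> (\<forall>r. (r - f r) * y = 0)" for y
    unfolding ann_def by auto
  have "(r - f r) * f x = 0" for r
  proof -
    have "(r - f r) * f x = f ((inv f r - f (inv f r)) * x)"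
      using aut by (simp add: ring_automorphism_mult ring_automorphism_diff ring_automorphism_inv_apply)
    then show ?thesis using x aut by (simp add: ann ring_automorphism_zero)
  qed
  then have "(x - f x) * (x - f x) = 0"
    using x by (simp add: ann right_diff_distrib)
  then have "x - f x = 0" by (rule semiprime_comm_square_eq_zero[OF sp comm])
  then show ?thesis by simp
qed

lemma ann_diff_range_ne_zero_iff_fixed_ideal:
  fixes f :: "'a::ring_1 \<Rightarrow> 'a"
  assumes sp: "semiprime TYPE('a)" and aut: "ring_automorphism f"
    and comm: "\<And>x y::'a. x * y = y * x"
  shows "ann (range (\<lambda>r. r - f r)) \<noteq> {0} \<longleftrightarrow> (\<exists>I. rideal I \<and> I \<noteq> {0} \<and> (\<forall>x\<in>I. f x = x))"
proof
  assume "ann (range (\<lambda>r. r - f r)) \<noteq> {0}"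
  then show "\<exists>I. rideal I \<and> I \<noteq> {0} \<and> (\<forall>x\<in>I. f x = x)"
    using rideal_ann_comm[OF comm] ann_diff_range_fixed[OF sp aut comm] by blast
next
  assume "\<exists>I. rideal I \<and> I \<noteq> {0} \<and> (\<forall>x\<in>I. f x = x)"
  then obtain I i where I: "rideal I" "\<forall>x\<in>I. f x = x" and i: "i \<in> I" "i \<noteq> 0"
    using rideal_zero by blast
  have "f r * i = r * i" for r
    using fixed_ideal_mult_right[OF aut I i(1)] comm by metis
  then have "i \<in> ann (range (\<lambda>r. r - f r))"
    unfolding ann_def by (auto simp: left_diff_distrib)
  then show "ann (range (\<lambda>r. r - f r)) \<noteq> {0}" using i(2) by blast
qed

text \<open>Junk outside the direct sum I + ann I, where the decomposition is unique.\<close>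
definition ann_proj :: "'a::ring_1 set \<Rightarrow> 'a \<Rightarrow> 'a" where
  "ann_proj I x = (THE i. i \<in> I \<and> x - i \<in> ann I)"

lemma ann_proj_eq:
  fixes I :: "'a::ring_1 set"
  assumes sp: "semiprime TYPE('a)" and comm: "\<And>x y::'a. x * y = y * x"
    and I: "rideal I" and "i \<in> I" and "b \<in> ann I"
  shows "ann_proj I (i + b) = i"
  unfolding ann_proj_def
proof (rule the_equality)
  show "i \<in> I \<and> i + b - i \<in> ann I" using assms by simp
  fix i' assume i': "i' \<in> I \<and> i + b - i' \<in> ann I"
  have "i - i' \<in> I" using I \<open>i \<in> I\<close> i' by (simp add: rideal_diff)
  moreover have "i - i' \<in> ann I"
    using rideal_diff[OF rideal_ann_comm[OF comm] _ \<open>b \<in> ann I\<close>, of "i + b - i'"] i' by simp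
  ultimately have "(i - i') * (i - i') = 0" unfolding ann_def by blast
  then have "i - i' = 0" by (rule semiprime_comm_square_eq_zero[OF sp comm])
  then show "i' = i" by simp
qed

lemma ann_proj_mq_reps:
  fixes I :: "'a::ring_1 set"
  assumes sp: "semiprime TYPE('a)" and comm: "\<And>x y::'a. x * y = y * x" and I: "rideal I"
  shows "(ideal_sum I (ann I), ann_proj I) \<in> mq_reps"
proof -
  have A: "rideal (ann I)" by (rule rideal_ann_comm[OF comm])
  have proj: "ann_proj I (i + b) = i" if "i \<in> I" "b \<in> ann I" for i b
    using ann_proj_eq[OF sp comm I that] .
  have "dense_ideal (ideal_sum I (ann I))"
    unfolding dense_ideal_def
  proof (intro conjI allI impI)
    show "rideal (ideal_sum I (ann I))" by (rule rideal_ideal_sum[OF I A])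
    fix x assume x: "\<forall>a\<in>ideal_sum I (ann I). a * x = 0"
    have "x \<in> ann I"
      unfolding ann_def using x ideal_sum_subset_left[OF A] by blast
    then have "x * x = 0" using x ideal_sum_subset_right[OF I] by blast
    then show "x = 0" by (rule semiprime_comm_square_eq_zero[OF sp comm])
  qed
  moreover have "ann_proj I (a + a') = ann_proj I a + ann_proj I a'"
    if sum: "a \<in> ideal_sum I (ann I)" "a' \<in> ideal_sum I (ann I)" for a a'
  proof -
    obtain i b i' b' where a: "a = i + b" "i \<in> I" "b \<in> ann I" and a': "a' = i' + b'" "i' \<in> I" "b' \<in> ann I"
      using sum unfolding ideal_sum_def by blast
    have "a + a' = (i + i') + (b + b')" using a a' by (simp add: algebra_simps)
    then have "ann_proj I (a + a') = i + i'"
      using a(2,3) a'(2,3) I A by (simp add: proj rideal_add)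
    then show ?thesis using a a' by (simp add: proj)
  qed
  moreover have "ann_proj I (r * a) = r * ann_proj I a" if sum: "a \<in> ideal_sum I (ann I)" for r a
  proof -
    obtain i b where "a = i + b" "i \<in> I" "b \<in> ann I"
      using sum unfolding ideal_sum_def by blast
    then show ?thesis using I A by (simp add: proj rideal_mult_left distrib_left)
  qed
  ultimately show ?thesis unfolding mq_reps_def by blast
qed

lemma X_inner_if_fixed_ideal:
  fixes f :: "'a::ring_1 \<Rightarrow> 'a"
  assumes sp: "semiprime TYPE('a)" and aut: "ring_automorphism f"
    and comm: "\<And>x y::'a. x * y = y * x"
    and I: "rideal I" "I \<noteq> {0}" and fixed: "\<forall>x\<in>I. f x = x"
  shows "X_inner f"
  unfolding X_inner_iff_mq_reps
proof (intro exI conjI)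
  have A: "rideal (ann I)" by (rule rideal_ann_comm[OF comm])
  have proj: "ann_proj I (i + b) = i" if "i \<in> I" "b \<in> ann I" for i b
    using ann_proj_eq[OF sp comm I(1) that] .
  show "(ideal_sum I (ann I), ann_proj I) \<in> mq_reps"
    by (rule ann_proj_mq_reps[OF sp comm I(1)])
  obtain i where i: "i \<in> I" "i \<noteq> 0" using I rideal_zero by blast
  then show "\<exists>a\<in>ideal_sum I (ann I). ann_proj I a \<noteq> 0"
    using proj[of i 0] A rideal_zero ideal_sum_subset_left[OF A] by force
  show "\<forall>r. \<forall>a\<in>ideal_sum I (ann I). ann_proj I (a * f r) = ann_proj I a * r"
  proof (intro allI ballI)
    fix r a assume "a \<in> ideal_sum I (ann I)"
    then obtain i b where a: "a = i + b" "i \<in> I" "b \<in> ann I"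
      unfolding ideal_sum_def by blast
    then have "ann_proj I (a * f r) = i * f r"
      using I A by (simp add: proj rideal_mult_right distrib_right)
    also have "\<dots> = ann_proj I a * r"
      using a fixed_ideal_mult_right[OF aut I(1) fixed a(2)] by (simp add: proj)
    finally show "ann_proj I (a * f r) = ann_proj I a * r" .
  qed
qed

lemma X_inner_iff_ann_diff_range_ne_zero:
  fixes f :: "'a::ring_1 \<Rightarrow> 'a"
  assumes sp: "semiprime TYPE('a)" and aut: "ring_automorphism f"
    and comm: "\<And>x y::'a. x * y = y * x"
  shows "X_inner f \<longleftrightarrow> ann (range (\<lambda>r. r - f r)) \<noteq> {0}"
  using ann_diff_range_ne_zero_if_X_inner[OF comm] X_inner_if_fixed_ideal[OF sp aut comm]
    ann_diff_range_ne_zero_iff_fixed_ideal[OF sp aut comm] by blast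

lemma X_inner_iff_fixed_idempotent:
  fixes f :: "'a::ring_1 \<Rightarrow> 'a"
  assumes sp: "semiprime TYPE('a)" and aut: "ring_automorphism f"
    and comm: "\<And>x y::'a. x * y = y * x" and vnr: "von_neumann_regular TYPE('a)"
  shows "X_inner f \<longleftrightarrow> (\<exists>e. e * e = e \<and> e \<noteq> 0 \<and> (\<forall>r. f (e * r) = e * r))"
proof
  assume "X_inner f"
  then obtain I a where I: "rideal I" "\<forall>x\<in>I. f x = x" and a: "a \<in> I" "a \<noteq> 0"
    using X_inner_iff_ann_diff_range_ne_zero[OF sp aut comm]
      ann_diff_range_ne_zero_iff_fixed_ideal[OF sp aut comm] rideal_zero by blast
  obtain x where x: "a * x * a = a" using vnr unfolding von_neumann_regular_def by blast
  have "a * x * (a * x) = a * x" using x by (simp add: mult.assoc[symmetric])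
  moreover have "a * x \<noteq> 0" using x a(2) by auto
  moreover have "f (a * x * r) = a * x * r" for r
    using I a(1) by (simp add: rideal_mult_right)
  ultimately show "\<exists>e. e * e = e \<and> e \<noteq> 0 \<and> (\<forall>r. f (e * r) = e * r)" by blast
next
  assume "\<exists>e. e * e = e \<and> e \<noteq> 0 \<and> (\<forall>r. f (e * r) = e * r)"
  then obtain e where "e \<noteq> 0" "\<forall>r. f (e * r) = e * r" by blast
  moreover have "e \<in> range ((*) e)" by (metis mult_1_right rangeI)
  ultimately show "X_inner f"
    using X_inner_if_fixed_ideal[OF sp aut comm rideal_principal_comm[OF comm]] by blast
qed

section \<open>Von Neumann regular rings\<close>

lemma mem_corner_iff:
  assumes "e * e = e" and "e' * e' = e'"
  shows "x \<in> corner e e' \<longleftrightarrow> e * x * e' = x"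
proof
  assume "x \<in> corner e e'"
  then obtain r where "x = e * r * e'" unfolding corner_def by blast
  then show "e * x * e' = x" using assms by (simp add: mult.assoc[symmetric]) (simp add: mult.assoc)
next
  assume "e * x * e' = x"
  then show "x \<in> corner e e'" unfolding corner_def by (metis (mono_tags) CollectI)
qed

lemma ring_automorphism_corner:
  assumes "ring_automorphism f" and "x \<in> corner e e'"
  shows "f x \<in> corner (f e) (f e')"
  using assms unfolding corner_def by (auto simp: ring_automorphism_mult)

lemma ring_automorphism_inv_corner:
  assumes aut: "ring_automorphism f" and y: "y \<in> corner (f e) (f e')"
  shows "inv f y \<in> corner e e'"
proof -
  obtain r where "y = f e * r * f e'" using y unfolding corner_def by blast
  then have "y = f (e * inv f r * e')"
    using aut by (simp add: ring_automorphism_mult ring_automorphism_inv_apply)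
  then show ?thesis using ring_automorphism_inj[OF aut] unfolding corner_def by auto
qed

lemma intertwining_idempotent_right_inverse:
  fixes f :: "'a::ring_1 \<Rightarrow> 'a"
  assumes aut: "ring_automorphism f"
    and e': "e' * e' = e'" and p: "p * e' = p" and w: "w * p = e'"
    and intertw: "\<And>x. x \<in> corner e' e' \<Longrightarrow> p * x = f x * p"
  shows "p * w * f e' = f e'"
proof -
  define e where "e = f e'"
  have ee: "e * e = e" unfolding e_def using aut e'(1) by (metis ring_automorphism_mult)
  have "e' \<in> corner e' e'" using e' by (simp add: mem_corner_iff)
  then have ep: "e * (p * y) = p * y" for y
    using intertw p unfolding e_def by (metis mult.assoc)
  define z where "z = e - p * w * e"
  have "e * z = z" "z * e = z"
    unfolding z_def using ee by (simp_all add: right_diff_distrib left_diff_distrib mult.assoc ep)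
  then have z: "z \<in> corner e e" using ee by (simp add: mem_corner_iff)
  have "z * p = e * p - p * (w * p)"
    unfolding z_def using ep[of 1] by (simp add: left_diff_distrib mult.assoc)
  then have zp: "z * p = 0" using ep[of 1] p w by simp
  define x where "x = inv f z"
  have x: "x \<in> corner e' e'" "f x = z"
    unfolding x_def e_def using ring_automorphism_inv_corner[OF aut z[unfolded e_def]]
      ring_automorphism_inv_apply[OF aut] by auto
  then have "p * x = 0" using intertw zp by simp
  moreover have "x = w * p * x * e'" using x(1) e' w by (simp add: mem_corner_iff)
  ultimately have "x = 0" by (simp add: mult.assoc)
  then have "z = 0" using x(2) ring_automorphism_zero[OF aut] by simp
  then show ?thesis unfolding z_def e_def by simp
qed

lemma corner_inner_if_intertwining_idempotent:
  fixes f :: "'a::ring_1 \<Rightarrow> 'a"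
  assumes aut: "ring_automorphism f"
    and e': "e' * e' = e'" "e' \<noteq> 0" and p: "p * e' = p" and w: "w * p = e'"
    and intertw: "\<And>x. x \<in> corner e' e' \<Longrightarrow> p * x = f x * p"
  shows "corner_inner f"
proof -
  define e where "e = f e'"
  have inj: "inj f" using aut by (rule ring_automorphism_inj)
  have inv_e: "inv f e = e'" unfolding e_def using inj by simp
  have ee: "e * e = e" unfolding e_def using aut e'(1) by (metis ring_automorphism_mult)
  have "e \<noteq> 0" unfolding e_def using e'(2) inj ring_automorphism_zero[OF aut] by (metis injD)
  have "e' \<in> corner e' e'" using e'(1) by (simp add: mem_corner_iff)
  then have ep: "e * p = p" using intertw p unfolding e_def by metis
  define v where "v = e' * w * e"
  have pv: "p * v = e"
    unfolding v_def e_def using p intertwining_idempotent_right_inverse[OF aut e'(1) p w intertw]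
    by (simp add: mult.assoc[symmetric])
  have vp: "v * p = e'" unfolding v_def using ep w e'(1) by (simp add: mult.assoc)
  have "p \<in> corner e e'" using ep p unfolding corner_def by (metis (mono_tags) CollectI)
  moreover have "v \<in> corner e' e" unfolding corner_def v_def by blast
  moreover have "f x = p * x * v" if x: "x \<in> corner e' e'" for x
  proof -
    have "p * x * v = f x * e" using intertw[OF x] pv by (simp add: mult.assoc)
    also have "\<dots> = f x"
      using ring_automorphism_corner[OF aut x] ee unfolding e_def[symmetric]
      by (simp add: mem_corner_iff) (metis mult.assoc)
    finally show ?thesis by simp
  qed
  moreover have "inv f y = v * y * p" if y: "y \<in> corner e e" for y
  proof -
    have x: "inv f y \<in> corner e' e'"
      using ring_automorphism_inv_corner[OF aut] y unfolding e_def by blast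
    have "v * y * p = v * p * inv f y"
      using intertw[OF x] ring_automorphism_inv_apply[OF aut] by (simp add: mult.assoc)
    also have "\<dots> = inv f y" using vp x e'(1) by (simp add: mem_corner_iff) (metis mult.assoc)
    finally show ?thesis by simp
  qed
  ultimately show ?thesis
    unfolding corner_inner_def Let_def
    using ee \<open>e \<noteq> 0\<close> pv vp by (intro exI[of _ e]) (auto simp: inv_e)
qed

lemma corner_inner_if_intertwining:
  fixes f :: "'a::ring_1 \<Rightarrow> 'a"
  assumes aut: "ring_automorphism f" and vnr: "von_neumann_regular TYPE('a)"
    and g': "g' * g' = g'" and "p \<noteq> 0" and p: "p * g' = p"
    and intertw: "\<And>x. x \<in> corner g' g' \<Longrightarrow> p * x = f x * p"
  shows "corner_inner f"
proof -
  obtain q where q: "p * q * p = p" using vnr unfolding von_neumann_regular_def by blast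
  have "g' \<in> corner g' g'" using g' by (simp add: mem_corner_iff)
  then have gp: "f g' * p = p" using intertw p by metis
  txt \<open>The outer factors g' and f g' keep e' = w p inside the corner g' R g'.\<close>
  define w where "w = g' * q * f g'"
  have pwp: "p * w * p = p" unfolding w_def using p gp q by (simp add: mult.assoc) (metis mult.assoc)
  define e' where "e' = w * p"
  have e'e': "e' * e' = e'" unfolding e'_def using pwp by (metis mult.assoc)
  have pe': "p * e' = p" unfolding e'_def using pwp by (simp add: mult.assoc)
  have "e' \<noteq> 0" using pe' \<open>p \<noteq> 0\<close> by auto
  have "g' * e' = e'" "e' * g' = e'"
    unfolding e'_def w_def using g' p by (simp_all add: mult.assoc[symmetric]) (simp add: mult.assoc)
  then have "x \<in> corner g' g'" if "x \<in> corner e' e'" for x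
    using that g' e'e' by (simp add: mem_corner_iff) (metis mult.assoc)
  then show ?thesis
    using corner_inner_if_intertwining_idempotent[OF aut e'e' \<open>e' \<noteq> 0\<close> pe'] intertw e'_def by blast
qed

lemma X_inner_imp_intertwining:
  fixes f :: "'a::ring_1 \<Rightarrow> 'a"
  assumes aut: "ring_automorphism f" and vnr: "von_neumann_regular TYPE('a)" and "X_inner f"
  obtains g' p where "g' * g' = g'" "p \<noteq> 0" "p * g' = p"
    and "\<And>x. x \<in> corner g' g' \<Longrightarrow> p * x = f x * p"
proof -
  obtain J \<phi> b where rep: "(J, \<phi>) \<in> mq_reps" and b: "b \<in> J" "\<phi> b \<noteq> 0"
    and intertw: "\<forall>r. \<forall>a\<in>J. \<phi> (a * f r) = \<phi> a * r"
    using assms(3) unfolding X_inner_iff_mq_reps by blast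
  obtain y where y: "b * (y * b) = b" using vnr unfolding von_neumann_regular_def by (metis mult.assoc)
  define g where "g = y * b"
  have g: "g \<in> J" unfolding g_def using mq_reps_rideal[OF rep] b(1) by (rule rideal_mult_left)
  have gg: "g * g = g" and bg: "b * g = b" unfolding g_def using y by (simp_all add: mult.assoc)
  define p where "p = \<phi> g"
  have "\<phi> b = b * p" unfolding p_def using mq_reps_mult_left[OF rep g, of b] bg by simp
  then have "p \<noteq> 0" using b(2) by auto
  have gp: "g * p = p" unfolding p_def using mq_reps_mult_left[OF rep g, of g] gg by simp
  define g' where "g' = inv f g"
  have fg': "f g' = g" unfolding g'_def using aut by (rule ring_automorphism_inv_apply)
  have g'g': "g' * g' = g'"
    using gg fg' ring_automorphism_inj[OF aut] by (metis aut injD ring_automorphism_mult)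
  have intertw_corner: "p * x = f x * p" if x: "x \<in> corner g' g'" for x
  proof -
    have fx: "f x \<in> corner g g" using ring_automorphism_corner[OF aut x] fg' by simp
    then have gfx: "g * f x = f x" "f x * g = f x" using gg by (simp_all add: mem_corner_iff) (metis mult.assoc)+
    have "p * x = \<phi> (g * f x)" unfolding p_def using intertw g by simp
    also have "\<dots> = \<phi> (f x * g)" using gfx by simp
    also have "\<dots> = f x * p" unfolding p_def using mq_reps_mult_left[OF rep g] .
    finally show ?thesis .
  qed
  have "g' \<in> corner g' g'" using g'g' by (simp add: mem_corner_iff)
  then have "p * g' = p" using intertw_corner fg' gp by simp
  then show ?thesis using that g'g' \<open>p \<noteq> 0\<close> intertw_corner by blast
qed

lemma corner_inner_if_X_inner:
  fixes f :: "'a::ring_1 \<Rightarrow> 'a"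
  assumes "ring_automorphism f" and "von_neumann_regular TYPE('a)" and "X_inner f"
  shows "corner_inner f"
  using X_inner_imp_intertwining[OF assms] corner_inner_if_intertwining[OF assms(1,2)] by metis

theorem proposition2p6:
  fixes f :: "'a::ring_1 \<Rightarrow> 'a"
  assumes "semiprime TYPE('a)" and "ring_automorphism f"
  shows "((\<forall>x y::'a. x * y = y * x) \<longrightarrow>
            ((X_inner f \<longleftrightarrow> ann (range (\<lambda>r. r - f r)) \<noteq> {0}) \<and>
             (ann (range (\<lambda>r. r - f r)) \<noteq> {0} \<longleftrightarrow>
                (\<exists>I. rideal I \<and> I \<noteq> {0} \<and> (\<forall>x\<in>I. f x = x)))))
       \<and> ((\<forall>x y::'a. x * y = y * x) \<and> von_neumann_regular TYPE('a) \<longrightarrow>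
            (X_inner f \<longleftrightarrow> (\<exists>e. e * e = e \<and> e \<noteq> 0 \<and> (\<forall>r. f (e * r) = e * r))))
       \<and> (von_neumann_regular TYPE('a) \<and> X_inner f \<longrightarrow> corner_inner f)"
proof (intro conjI impI)
  assume comm: "\<forall>x y::'a. x * y = y * x"
  show "X_inner f \<longleftrightarrow> ann (range (\<lambda>r. r - f r)) \<noteq> {0}"
    using X_inner_iff_ann_diff_range_ne_zero[OF assms comm[rule_format]] .
  show "ann (range (\<lambda>r. r - f r)) \<noteq> {0} \<longleftrightarrow> (\<exists>I. rideal I \<and> I \<noteq> {0} \<and> (\<forall>x\<in>I. f x = x))"
    using ann_diff_range_ne_zero_iff_fixed_ideal[OF assms comm[rule_format]] .
next
  assume "(\<forall>x y::'a. x * y = y * x) \<and> von_neumann_regular TYPE('a)"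
  then show "X_inner f \<longleftrightarrow> (\<exists>e. e * e = e \<and> e \<noteq> 0 \<and> (\<forall>r. f (e * r) = e * r))"
    using X_inner_iff_fixed_idempotent[OF assms] by blast
next
  assume "von_neumann_regular TYPE('a) \<and> X_inner f"
  then show "corner_inner f" using corner_inner_if_X_inner[OF assms(2)] by blast
qed

end
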